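(* Let $\mathbb{K}$ be a field, let $P_1, P_2 \in \mathbb{K}[X]$ be irreducible polynomials with $P_1' \neq 0$ and $P_2' \neq 0$, and let $k \geq 1$ be an integer. Then the rings $\mathbb{K}[X]/(P_1^k)$ and $\mathbb{K}[X]/(P_2^k)$ are isomorphic if and only if the fields $\mathbb{K}[X]/(P_1)$ and $\mathbb{K}[X]/(P_2)$ are isomorphic (as rings).
   Context: $\mathbb{K}$ is an arbitrary field; $P'$ denotes the formal derivative (for irreducible $P$, $P'\neq0$ means $P$ is separable). The rings $\mathbb{K}[X]/(P_i^k)$ are local with residue field $\mathbb{K}[X]/(P_i)$. *)

theory Defs
  imports "HOL-Computational_Algebra.Polynomial" "HOL-Algebra.QuotRing"
begin

text \<open>The polynomial ring K[X] (type-class polynomials over a field 'a)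
  viewed as an HOL-Algebra ring structure, so that quotient rings
  K[X]/(P) can be formed with Quot and compared with ring isomorphism.\<close>
definition Kx :: "'a::field poly ring" where
  "Kx = \<lparr>carrier = UNIV, mult = (*), one = 1, zero = 0, add = (+)\<rparr>"

end

theory Submission
  imports Defs "HOL-Number_Theory.Cong" "HOL-Computational_Algebra.Polynomial_Factorial"
begin

(* A ring isomorphism K[X]/(P^k) ~ K[X]/(Q^k) maps nilpotents to nilpotents, hence the maximal
   ideal (P)/(P^k) onto (Q)/(Q^k), and so induces an isomorphism of the residue fields.
   Conversely, as P is separable, Newton iteration gives Y = X (mod P) with P(Y) = 0 (mod P^k).
   Then F |-> sum_j F_j(Y) P^j identifies (K[X]/(P))[T]/(T^k) with K[X]/(P^k), and an
   isomorphism of residue fields acts coefficientwise on these truncated polynomial rings. *)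

section \<open>Quotient rings of K[X] through representatives\<close>

definition cong_class :: "'a::field poly \<Rightarrow> 'a poly \<Rightarrow> 'a poly set" where
  "cong_class P a = {b. [b = a] (mod P)}"

lemma cong_class_eq_iff: "cong_class P a = cong_class P b \<longleftrightarrow> [a = b] (mod P)"
proof
  assume "cong_class P a = cong_class P b"
  then show "[a = b] (mod P)"
    unfolding cong_class_def by (metis cong_refl mem_Collect_eq)
qed (auto simp: cong_class_def intro: cong_trans cong_sym)

lemma a_r_coset_Kx: "PIdl\<^bsub>Kx\<^esub> P +>\<^bsub>Kx\<^esub> a = cong_class P a"
proof -
  have "\<exists>h. (\<exists>x. h = x * P) \<and> b = h + a" if b: "b \<in> cong_class P a" for b
  proof -
    obtain x where "b - a = P * x"
      using b by (auto simp: cong_class_def cong_iff_dvd_diff dvd_def)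
    then show ?thesis by (metis diff_add_cancel mult.commute)
  qed
  then show ?thesis
    unfolding a_r_coset_def r_coset_def cgenideal_def Kx_def
    by (auto simp: cong_class_def cong_iff_dvd_diff mult.commute)
qed

lemma carrier_Kx_Quot: "carrier (Kx Quot PIdl\<^bsub>Kx\<^esub> P) = range (cong_class P)"
  unfolding FactRing_def A_RCOSETS_def RCOSETS_def
  by (auto simp: a_r_coset_Kx[symmetric] a_r_coset_def Kx_def)

lemma one_Kx_Quot: "\<one>\<^bsub>Kx Quot PIdl\<^bsub>Kx\<^esub> P\<^esub> = cong_class P 1"
  unfolding FactRing_def by (simp add: a_r_coset_Kx[symmetric] Kx_def)

lemma add_Kx_Quot:
  "cong_class P a \<oplus>\<^bsub>Kx Quot PIdl\<^bsub>Kx\<^esub> P\<^esub> cong_class P b = cong_class P (a + b)"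
proof -
  have "c \<in> cong_class P (a + b) \<Longrightarrow> \<exists>x y. c = x + y \<and> x \<in> cong_class P a \<and> y \<in> cong_class P b"
    for c
    by (rule exI[of _ "c - b"], rule exI[of _ b])
       (simp add: cong_class_def cong_iff_dvd_diff diff_diff_eq add.commute)
  then have "(\<Union>x\<in>cong_class P a. \<Union>y\<in>cong_class P b. {x + y}) = cong_class P (a + b)"
    by (auto simp: cong_class_def intro: cong_add) blast
  then show ?thesis
    unfolding FactRing_def set_add_def set_mult_def by (simp add: Kx_def)
qed

lemma mult_Kx_Quot:
  "cong_class P a \<otimes>\<^bsub>Kx Quot PIdl\<^bsub>Kx\<^esub> P\<^esub> cong_class P b = cong_class P (a * b)"
proof -
  have "cong_class P (x * y) = cong_class P (a * b)"
    if "x \<in> cong_class P a" "y \<in> cong_class P b" for x y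
    using that unfolding cong_class_eq_iff by (simp add: cong_class_def cong_mult)
  moreover have "a \<in> cong_class P a" "b \<in> cong_class P b"
    by (simp_all add: cong_class_def)
  ultimately have
    "(\<Union>x\<in>cong_class P a. \<Union>y\<in>cong_class P b. cong_class P (x * y)) = cong_class P (a * b)"
    by blast
  then show ?thesis
    unfolding FactRing_def rcoset_mult_def by (simp add: a_r_coset_Kx) (simp add: Kx_def)
qed

lemma cring_Kx: "cring Kx"
  unfolding Kx_def
  by (intro cringI abelian_groupI comm_monoidI)
     (auto simp: algebra_simps intro: exI[of _ "- _"])

lemma ring_Kx_Quot: "ring (Kx Quot PIdl\<^bsub>Kx\<^esub> P)"
  by (intro ideal.quotient_is_ring cring.cgenideal_ideal cring_Kx) (simp add: Kx_def)

definition induces_ring_hom ::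
    "'a::unique_euclidean_ring \<Rightarrow> 'a \<Rightarrow> ('a \<Rightarrow> 'a) \<Rightarrow> bool" where
  "induces_ring_hom P Q f \<longleftrightarrow>
     (\<forall>a b. [a = b] (mod P) \<longrightarrow> [f a = f b] (mod Q)) \<and>
     (\<forall>a b. [f (a + b) = f a + f b] (mod Q)) \<and>
     (\<forall>a b. [f (a * b) = f a * f b] (mod Q)) \<and> [f 1 = 1] (mod Q)"

definition induces_ring_iso ::
    "'a::unique_euclidean_ring \<Rightarrow> 'a \<Rightarrow> ('a \<Rightarrow> 'a) \<Rightarrow> ('a \<Rightarrow> 'a) \<Rightarrow> bool" where
  "induces_ring_iso P Q f g \<longleftrightarrow> induces_ring_hom P Q f \<and> induces_ring_hom Q P g \<and>
     (\<forall>a. [g (f a) = a] (mod P)) \<and> (\<forall>b. [f (g b) = b] (mod Q))"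

context
  fixes P Q :: "'a::unique_euclidean_ring" and f :: "'a \<Rightarrow> 'a"
  assumes f: "induces_ring_hom P Q f"
begin

lemma induces_ring_hom_cong: "[a = b] (mod P) \<Longrightarrow> [f a = f b] (mod Q)"
  using f unfolding induces_ring_hom_def by blast

lemma induces_ring_hom_add: "[f (a + b) = f a + f b] (mod Q)"
  using f unfolding induces_ring_hom_def by blast

lemma induces_ring_hom_mult: "[f (a * b) = f a * f b] (mod Q)"
  using f unfolding induces_ring_hom_def by blast

lemma induces_ring_hom_one: "[f 1 = 1] (mod Q)"
  using f unfolding induces_ring_hom_def by blast

lemma induces_ring_hom_zero: "[f 0 = 0] (mod Q)"
  using induces_ring_hom_add[of 0 0] by (simp add: cong_iff_dvd_diff)

lemma induces_ring_hom_diff: "[f (a - b) = f a - f b] (mod Q)"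
proof -
  have "[f (a - b) + f b = f a] (mod Q)"
    using induces_ring_hom_add[of "a - b" b] by (simp add: cong_sym)
  then show ?thesis
    by (metis add_diff_cancel_right' cong_diff cong_refl)
qed

lemma induces_ring_hom_power: "[f (a ^ n) = f a ^ n] (mod Q)"
proof (induction n)
  case 0
  show ?case using induces_ring_hom_one by simp
next
  case (Suc n)
  have "[f (a * a ^ n) = f a * f (a ^ n)] (mod Q)" by (rule induces_ring_hom_mult)
  also have "[f a * f (a ^ n) = f a * f a ^ n] (mod Q)" using Suc by (intro cong_mult cong_refl)
  finally show ?case by simp
qed

lemma induces_ring_hom_sum: "finite A \<Longrightarrow> [f (\<Sum>i\<in>A. u i) = (\<Sum>i\<in>A. f (u i))] (mod Q)"
proof (induction A rule: finite_induct)
  case empty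
  show ?case using induces_ring_hom_zero by simp
next
  case (insert x A)
  have "[f (u x + (\<Sum>i\<in>A. u i)) = f (u x) + f (\<Sum>i\<in>A. u i)] (mod Q)"
    by (rule induces_ring_hom_add)
  also have "[f (u x) + f (\<Sum>i\<in>A. u i) = f (u x) + (\<Sum>i\<in>A. f (u i))] (mod Q)"
    using insert.IH by (intro cong_add cong_refl)
  finally show ?case using insert.hyps by simp
qed

end

lemma induces_ring_hom_congruent_map:
  assumes "induces_ring_hom P Q f" and "\<And>a. [f' a = f a] (mod Q)"
  shows "induces_ring_hom P Q f'"
  unfolding induces_ring_hom_def
proof (intro conjI allI impI)
  fix a b
  note f' = assms(2) assms(2)[THEN cong_sym]
  show "[f' a = f' b] (mod Q)" if "[a = b] (mod P)"
    using f' induces_ring_hom_cong[OF assms(1) that] by (meson cong_trans)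
  show "[f' (a + b) = f' a + f' b] (mod Q)"
    using f' induces_ring_hom_add[OF assms(1)] by (meson cong_add cong_trans)
  show "[f' (a * b) = f' a * f' b] (mod Q)"
    using f' induces_ring_hom_mult[OF assms(1)] by (meson cong_mult cong_trans)
next
  show "[f' 1 = 1] (mod Q)"
    using assms(2) induces_ring_hom_one[OF assms(1)] by (rule cong_trans)
qed

lemma induces_ring_iso_congruent_maps:
  assumes "induces_ring_iso P Q f g"
    and "\<And>a. [f' a = f a] (mod Q)" and "\<And>b. [g' b = g b] (mod P)"
  shows "induces_ring_iso P Q f' g'"
proof -
  have "induces_ring_hom P Q f" "induces_ring_hom Q P g"
    using assms(1) unfolding induces_ring_iso_def by blast+
  moreover have "[g' (f' a) = a] (mod P)" for a
  proof -
    have "[g' (f' a) = g (f' a)] (mod P)" by (rule assms(3))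
    also have "[g (f' a) = g (f a)] (mod P)"
      by (rule induces_ring_hom_cong[OF \<open>induces_ring_hom Q P g\<close> assms(2)])
    also have "[g (f a) = a] (mod P)" using assms(1) unfolding induces_ring_iso_def by blast
    finally show ?thesis .
  qed
  moreover have "[f' (g' b) = b] (mod Q)" for b
  proof -
    have "[f' (g' b) = f (g' b)] (mod Q)" by (rule assms(2))
    also have "[f (g' b) = f (g b)] (mod Q)"
      by (rule induces_ring_hom_cong[OF \<open>induces_ring_hom P Q f\<close> assms(3)])
    also have "[f (g b) = b] (mod Q)" using assms(1) unfolding induces_ring_iso_def by blast
    finally show ?thesis .
  qed
  ultimately show ?thesis
    using assms(2,3) by (simp add: induces_ring_iso_def induces_ring_hom_congruent_map)
qed

definition induced_map ::
    "'a::field poly \<Rightarrow> 'a poly \<Rightarrow> ('a poly \<Rightarrow> 'a poly) \<Rightarrow> 'a poly set \<Rightarrow> 'a poly set" where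
  "induced_map P Q f C = cong_class Q (f (SOME a. C = cong_class P a))"

lemma induced_map_cong_class:
  assumes "induces_ring_hom P Q f"
  shows "induced_map P Q f (cong_class P a) = cong_class Q (f a)"
proof -
  have "cong_class P a = cong_class P (SOME a'. cong_class P a = cong_class P a')"
    by (rule someI_ex) blast
  then show ?thesis
    unfolding induced_map_def cong_class_eq_iff
    by (intro induces_ring_hom_cong[OF assms]) (simp add: cong_sym)
qed

lemma induces_ring_iso_imp_ring_iso:
  assumes iso: "induces_ring_iso P Q f g"
  shows "induced_map P Q f \<in> ring_iso (Kx Quot PIdl\<^bsub>Kx\<^esub> P) (Kx Quot PIdl\<^bsub>Kx\<^esub> Q)"
proof -
  have f: "induces_ring_hom P Q f" and g: "induces_ring_hom Q P g"
    using iso unfolding induces_ring_iso_def by blast+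
  note f_cls = induced_map_cong_class[OF f] and g_cls = induced_map_cong_class[OF g]
  show ?thesis
  proof (rule ring_iso_memI)
    show "induced_map P Q f x \<in> carrier (Kx Quot PIdl\<^bsub>Kx\<^esub> Q)"
      if "x \<in> carrier (Kx Quot PIdl\<^bsub>Kx\<^esub> P)" for x
      using that by (auto simp: carrier_Kx_Quot f_cls)
  next
    fix x y assume "x \<in> carrier (Kx Quot PIdl\<^bsub>Kx\<^esub> P)" "y \<in> carrier (Kx Quot PIdl\<^bsub>Kx\<^esub> P)"
    then obtain a b where ab: "x = cong_class P a" "y = cong_class P b"
      by (auto simp: carrier_Kx_Quot)
    show "induced_map P Q f (x \<otimes>\<^bsub>Kx Quot PIdl\<^bsub>Kx\<^esub> P\<^esub> y) =
        induced_map P Q f x \<otimes>\<^bsub>Kx Quot PIdl\<^bsub>Kx\<^esub> Q\<^esub> induced_map P Q f y"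
      by (simp add: ab f_cls mult_Kx_Quot cong_class_eq_iff induces_ring_hom_mult[OF f])
    show "induced_map P Q f (x \<oplus>\<^bsub>Kx Quot PIdl\<^bsub>Kx\<^esub> P\<^esub> y) =
        induced_map P Q f x \<oplus>\<^bsub>Kx Quot PIdl\<^bsub>Kx\<^esub> Q\<^esub> induced_map P Q f y"
      by (simp add: ab f_cls add_Kx_Quot cong_class_eq_iff induces_ring_hom_add[OF f])
  next
    show "induced_map P Q f \<one>\<^bsub>Kx Quot PIdl\<^bsub>Kx\<^esub> P\<^esub> = \<one>\<^bsub>Kx Quot PIdl\<^bsub>Kx\<^esub> Q\<^esub>"
      by (simp add: one_Kx_Quot f_cls cong_class_eq_iff induces_ring_hom_one[OF f])
  next
    have "[g (f a) = a] (mod P)" "[f (g b) = b] (mod Q)" for a b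
      using iso unfolding induces_ring_iso_def by blast+
    then show "bij_betw (induced_map P Q f)
        (carrier (Kx Quot PIdl\<^bsub>Kx\<^esub> P)) (carrier (Kx Quot PIdl\<^bsub>Kx\<^esub> Q))"
      by (intro bij_betw_byWitness[where f' = "induced_map Q P g"])
         (auto simp: carrier_Kx_Quot f_cls g_cls cong_class_eq_iff)
  qed
qed

definition representative_map ::
    "'a::field poly \<Rightarrow> 'a poly \<Rightarrow> ('a poly set \<Rightarrow> 'a poly set) \<Rightarrow> 'a poly \<Rightarrow> 'a poly" where
  "representative_map P Q h a = (SOME b. h (cong_class P a) = cong_class Q b)"

lemma cong_class_representative_map:
  assumes "h \<in> ring_hom (Kx Quot PIdl\<^bsub>Kx\<^esub> P) (Kx Quot PIdl\<^bsub>Kx\<^esub> Q)"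
  shows "cong_class Q (representative_map P Q h a) = h (cong_class P a)"
proof -
  have "h (cong_class P a) \<in> range (cong_class Q)"
    using ring_hom_closed[OF assms] by (simp add: carrier_Kx_Quot)
  then show ?thesis
    unfolding representative_map_def by (metis (mono_tags, lifting) rangeE someI_ex)
qed

lemma ring_hom_imp_induces_ring_hom:
  assumes h: "h \<in> ring_hom (Kx Quot PIdl\<^bsub>Kx\<^esub> P) (Kx Quot PIdl\<^bsub>Kx\<^esub> Q)"
  shows "induces_ring_hom P Q (representative_map P Q h)"
proof -
  let ?r = "representative_map P Q h"
  note rep = cong_class_representative_map[OF h]
  have cls: "cong_class P a \<in> carrier (Kx Quot PIdl\<^bsub>Kx\<^esub> P)" for a
    by (simp add: carrier_Kx_Quot)
  have "cong_class Q (?r (a + b)) = cong_class Q (?r a + ?r b)" for a b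
    using ring_hom_add[OF h cls cls, of a b] by (simp add: rep add_Kx_Quot[symmetric])
  moreover have "cong_class Q (?r (a * b)) = cong_class Q (?r a * ?r b)" for a b
    using ring_hom_mult[OF h cls cls, of a b] by (simp add: rep mult_Kx_Quot[symmetric])
  moreover have "cong_class Q (?r 1) = cong_class Q 1"
    using ring_hom_one[OF h] by (simp add: rep one_Kx_Quot)
  moreover have "cong_class Q (?r a) = cong_class Q (?r b)"
    if "cong_class P a = cong_class P b" for a b
    using that by (simp add: rep)
  ultimately show ?thesis
    unfolding induces_ring_hom_def cong_class_eq_iff[symmetric] by blast
qed

lemma Kx_Quot_iso_iff:
  "Kx Quot PIdl\<^bsub>Kx\<^esub> P \<simeq> Kx Quot PIdl\<^bsub>Kx\<^esub> Q \<longleftrightarrow> (\<exists>f g. induces_ring_iso P Q f g)"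
proof
  assume "Kx Quot PIdl\<^bsub>Kx\<^esub> P \<simeq> Kx Quot PIdl\<^bsub>Kx\<^esub> Q"
  then obtain h where h: "h \<in> ring_iso (Kx Quot PIdl\<^bsub>Kx\<^esub> P) (Kx Quot PIdl\<^bsub>Kx\<^esub> Q)"
    unfolding is_ring_iso_def by blast
  define h' where "h' = inv_into (carrier (Kx Quot PIdl\<^bsub>Kx\<^esub> P)) h"
  have h': "h' \<in> ring_iso (Kx Quot PIdl\<^bsub>Kx\<^esub> Q) (Kx Quot PIdl\<^bsub>Kx\<^esub> P)"
    unfolding h'_def by (rule ring_iso_set_sym[OF ring_Kx_Quot h])
  have bij: "bij_betw h (carrier (Kx Quot PIdl\<^bsub>Kx\<^esub> P)) (carrier (Kx Quot PIdl\<^bsub>Kx\<^esub> Q))"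
    using ring_iso_memE(5)[OF h] .
  define f where "f = representative_map P Q h"
  define g where "g = representative_map Q P h'"
  have f_cls: "cong_class Q (f a) = h (cong_class P a)" for a
    unfolding f_def using h by (simp add: cong_class_representative_map ring_iso_def)
  have g_cls: "cong_class P (g b) = h' (cong_class Q b)" for b
    unfolding g_def using h' by (simp add: cong_class_representative_map ring_iso_def)
  have "cong_class P (g (f a)) = cong_class P a" for a
    unfolding g_cls f_cls h'_def
    by (rule inv_into_f_f[OF bij_betw_imp_inj_on[OF bij]]) (simp add: carrier_Kx_Quot)
  moreover have "cong_class Q (f (g b)) = cong_class Q b" for b
    unfolding g_cls f_cls h'_def
    by (rule f_inv_into_f) (metis bij bij_betw_def carrier_Kx_Quot rangeI)
  moreover have "induces_ring_hom P Q f" "induces_ring_hom Q P g"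
    unfolding f_def g_def using h h'
    by (simp_all add: ring_hom_imp_induces_ring_hom ring_iso_def)
  ultimately show "\<exists>f g. induces_ring_iso P Q f g"
    unfolding induces_ring_iso_def cong_class_eq_iff by blast
next
  assume "\<exists>f g. induces_ring_iso P Q f g"
  then show "Kx Quot PIdl\<^bsub>Kx\<^esub> P \<simeq> Kx Quot PIdl\<^bsub>Kx\<^esub> Q"
    unfolding is_ring_iso_def using induces_ring_iso_imp_ring_iso by blast
qed

section \<open>Reduction to the residue fields\<close>

lemma induces_ring_hom_reduce_power:
  fixes P Q :: "'a::field poly"
  assumes f: "induces_ring_hom (P ^ k) (Q ^ k) f" and "k \<ge> 1" and "irreducible Q"
  shows "induces_ring_hom P Q f"
proof -
  have "Q dvd Q ^ k" using \<open>k \<ge> 1\<close> by (simp add: dvd_power)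
  note mod_Q = cong_dvd_modulus[OF _ this]
  have "[f a = f b] (mod Q)" if "[a = b] (mod P)" for a b
  proof -
    have "[(a - b) ^ k = 0] (mod P ^ k)"
      using that by (simp add: cong_iff_dvd_diff dvd_power_same)
    then have "[f ((a - b) ^ k) = f 0] (mod Q ^ k)"
      by (rule induces_ring_hom_cong[OF f])
    then have "[f (a - b) ^ k = 0] (mod Q ^ k)"
      using induces_ring_hom_power[OF f] induces_ring_hom_zero[OF f]
      by (meson cong_sym cong_trans)
    then have "Q dvd f (a - b) ^ k"
      unfolding cong_0_iff[symmetric] by (rule mod_Q)
    then have "Q dvd f (a - b)"
      by (rule prime_elem_dvd_power[OF field_poly_irreducible_imp_prime[OF \<open>irreducible Q\<close>]])
    then show ?thesis
      using mod_Q[OF induces_ring_hom_diff[OF f, of a b]]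
      by (metis cong_0_iff cong_diff_iff_cong_0 cong_sym cong_trans)
  qed
  then show ?thesis
    using f mod_Q unfolding induces_ring_hom_def by blast
qed

lemma induces_ring_iso_reduce_power:
  fixes P Q :: "'a::field poly"
  assumes "induces_ring_iso (P ^ k) (Q ^ k) f g" "k \<ge> 1" "irreducible P" "irreducible Q"
  shows "induces_ring_iso P Q f g"
proof -
  have "P dvd P ^ k" "Q dvd Q ^ k" using \<open>k \<ge> 1\<close> by (simp_all add: dvd_power)
  then show ?thesis
    using assms induces_ring_hom_reduce_power cong_dvd_modulus
    unfolding induces_ring_iso_def by meson
qed

section \<open>Hensel lifting\<close>

lemma euclidean_bezout:
  fixes a b :: "'a::euclidean_ring"
  shows "\<exists>u v d. d = u * a + v * b \<and> d dvd a \<and> d dvd b"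
proof (induction "euclidean_size b" arbitrary: a b rule: less_induct)
  case less
  show ?case
  proof (cases "b = 0")
    case True
    then show ?thesis by (intro exI[of _ 1] exI[of _ 0] exI[of _ a]) simp
  next
    case False
    then have "euclidean_size (a mod b) < euclidean_size b" by (rule mod_size_less)
    then obtain u v d where d: "d = u * b + v * (a mod b)" "d dvd b" "d dvd a mod b"
      using less by blast
    have "d = v * a + (u - v * (a div b)) * b"
      using d(1) by (simp add: minus_div_mult_eq_mod[symmetric] algebra_simps)
    moreover have "d dvd a"
      using d(2,3) by (metis div_mult_mod_eq dvd_add dvd_mult)
    ultimately show ?thesis using d(2) by blast
  qed
qed

lemma irreducible_cong_inverse:
  fixes P a :: "'a::field poly"
  assumes "irreducible P" and "\<not> P dvd a"
  shows "\<exists>u. [u * a = 1] (mod P)"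
proof -
  obtain u v d where d: "d = u * a + v * P" "d dvd a" "d dvd P"
    using euclidean_bezout by blast
  obtain e where e: "P = d * e" using d(3) by (elim dvdE)
  have "\<not> is_unit e"
  proof
    assume "is_unit e"
    then have "P dvd d" using e by (metis dvd_mult_unit_iff dvd_refl)
    then show False using d(2) assms(2) dvd_trans by blast
  qed
  then have "is_unit d" using irreducibleD[OF assms(1) e] by blast
  then obtain w where w: "1 = d * w" by (elim dvdE)
  have "u * w * a - 1 = P * (- (v * w))"
    using w d(1) by (simp add: algebra_simps)
  then have "[u * w * a = 1] (mod P)"
    by (simp add: cong_iff_dvd_diff)
  then show ?thesis ..
qed

lemma cong_pcompose:
  fixes Y Z :: "'a::field poly"
  assumes "[Y = Z] (mod M)"
  shows "[f \<circ>\<^sub>p Y = f \<circ>\<^sub>p Z] (mod M)"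
proof (induction f)
  case (pCons a f)
  then show ?case
    using assms by (simp add: pcompose_pCons cong_add cong_mult)
qed simp

lemma pcompose_cong_self:
  fixes P Y a :: "'a::field poly"
  assumes "[Y = [:0, 1:]] (mod P)"
  shows "[a \<circ>\<^sub>p Y = a] (mod P)"
  using cong_pcompose[OF assms, of a] by simp

lemma pcompose_taylor_dvd:
  fixes f Y H :: "'a::idom poly"
  shows "H ^ 2 dvd f \<circ>\<^sub>p (Y + H) - f \<circ>\<^sub>p Y - (pderiv f \<circ>\<^sub>p Y) * H"
proof (induction f)
  case (pCons a f)
  have "H dvd f \<circ>\<^sub>p (Y + H) - f \<circ>\<^sub>p Y"
  proof (induction f)
    case (pCons b g)
    have "pCons b g \<circ>\<^sub>p (Y + H) - pCons b g \<circ>\<^sub>p Y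
        = H * g \<circ>\<^sub>p (Y + H) + Y * (g \<circ>\<^sub>p (Y + H) - g \<circ>\<^sub>p Y)"
      by (simp add: pcompose_pCons algebra_simps)
    then show ?case using pCons.IH by simp
  qed simp
  then have "H ^ 2 dvd H * (f \<circ>\<^sub>p (Y + H) - f \<circ>\<^sub>p Y)"
    by (simp add: power2_eq_square)
  moreover have "pCons a f \<circ>\<^sub>p (Y + H) - pCons a f \<circ>\<^sub>p Y - (pderiv (pCons a f) \<circ>\<^sub>p Y) * H
     = Y * (f \<circ>\<^sub>p (Y + H) - f \<circ>\<^sub>p Y - (pderiv f \<circ>\<^sub>p Y) * H) + H * (f \<circ>\<^sub>p (Y + H) - f \<circ>\<^sub>p Y)"
    by (simp add: pcompose_pCons pderiv_pCons pcompose_add algebra_simps)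
  ultimately show ?case using pCons.IH by simp
qed simp

lemma not_dvd_pderiv:
  fixes P :: "'a::field poly"
  assumes "pderiv P \<noteq> 0"
  shows "\<not> P dvd pderiv P"
proof
  assume "P dvd pderiv P"
  then have "degree P \<le> degree (pderiv P)"
    using assms by (rule dvd_imp_degree_le)
  moreover have "degree (pderiv P) < degree P"
  proof (rule ccontr)
    assume "\<not> degree (pderiv P) < degree P"
    then have "coeff (pderiv P) (degree (pderiv P)) = 0"
      by (simp add: coeff_pderiv coeff_eq_0)
    then show False using assms by simp
  qed
  ultimately show False by simp
qed

definition lifted_root :: "'a::field poly \<Rightarrow> nat \<Rightarrow> 'a poly \<Rightarrow> bool" where
  "lifted_root P k Y \<longleftrightarrow> [Y = [:0, 1:]] (mod P) \<and> [P \<circ>\<^sub>p Y = 0] (mod P ^ k)"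

lemma newton_step_lifted_root:
  fixes P Y u :: "'a::field poly"
  assumes Y: "[Y = [:0, 1:]] (mod P)" and root: "P ^ k dvd P \<circ>\<^sub>p Y"
    and u: "[u * pderiv P = 1] (mod P)"
  shows "lifted_root P (Suc k) (Y - P \<circ>\<^sub>p Y * u)"
proof -
  define H where "H = - (P \<circ>\<^sub>p Y * u)"
  have "P dvd P \<circ>\<^sub>p Y"
    using pcompose_cong_self[OF Y, of P] by (metis cong_0_iff cong_trans dvd_refl)
  have "Y + H - [:0, 1:] = (Y - [:0, 1:]) - P \<circ>\<^sub>p Y * u"
    by (simp add: H_def)
  then have "[Y + H = [:0, 1:]] (mod P)"
    using Y \<open>P dvd P \<circ>\<^sub>p Y\<close> by (metis cong_iff_dvd_diff dvd_diff dvd_mult2)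
  moreover have "P ^ Suc k dvd P \<circ>\<^sub>p (Y + H)"
  proof -
    have "P ^ k * P dvd H ^ 2"
      using root \<open>P dvd P \<circ>\<^sub>p Y\<close> by (simp add: H_def power2_eq_square mult_dvd_mono)
    then have taylor: "P ^ Suc k dvd P \<circ>\<^sub>p (Y + H) - P \<circ>\<^sub>p Y - (pderiv P \<circ>\<^sub>p Y) * H"
      using pcompose_taylor_dvd dvd_trans by (metis power_Suc2)
    have "[u * (pderiv P \<circ>\<^sub>p Y) = u * pderiv P] (mod P)"
      using pcompose_cong_self[OF Y] by (intro cong_mult cong_refl)
    also note u
    finally have "P dvd 1 - u * (pderiv P \<circ>\<^sub>p Y)"
      by (simp add: cong_iff_dvd_diff dvd_diff_commute)
    with root have "P ^ k * P dvd P \<circ>\<^sub>p Y * (1 - u * (pderiv P \<circ>\<^sub>p Y))"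
      by (rule mult_dvd_mono)
    moreover have "P \<circ>\<^sub>p (Y + H) = (P \<circ>\<^sub>p (Y + H) - P \<circ>\<^sub>p Y - (pderiv P \<circ>\<^sub>p Y) * H)
        + P \<circ>\<^sub>p Y * (1 - u * (pderiv P \<circ>\<^sub>p Y))"
      by (simp add: H_def algebra_simps)
    ultimately show ?thesis using taylor by (metis dvd_add power_Suc2)
  qed
  moreover have "Y + H = Y - P \<circ>\<^sub>p Y * u" by (simp add: H_def)
  ultimately show ?thesis unfolding lifted_root_def cong_0_iff by simp
qed

lemma hensel_lifting:
  fixes P :: "'a::field poly"
  assumes "irreducible P" and "pderiv P \<noteq> 0"
  shows "\<exists>Y. lifted_root P k Y"
proof (induction k)
  case 0
  show ?case unfolding lifted_root_def by (intro exI[of _ "[:0, 1:]"]) simp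
next
  case (Suc k)
  then obtain Y where "[Y = [:0, 1:]] (mod P)" "P ^ k dvd P \<circ>\<^sub>p Y"
    unfolding lifted_root_def cong_0_iff by blast
  moreover obtain u where "[u * pderiv P = 1] (mod P)"
    using irreducible_cong_inverse[OF assms(1) not_dvd_pderiv[OF assms(2)]] by blast
  ultimately show ?case using newton_step_lifted_root by blast
qed

section \<open>P-adic expansions\<close>

definition adic_eval :: "'a::field poly \<Rightarrow> 'a poly \<Rightarrow> 'a poly poly \<Rightarrow> 'a poly" where
  "adic_eval P Y F = poly (map_poly (\<lambda>c. c \<circ>\<^sub>p Y) F) P"

lemma adic_eval_0 [simp]: "adic_eval P Y 0 = 0"
  by (simp add: adic_eval_def)

lemma adic_eval_pCons [simp]: "adic_eval P Y (pCons a F) = a \<circ>\<^sub>p Y + P * adic_eval P Y F"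
  by (simp add: adic_eval_def map_poly_pCons)

lemma adic_eval_add: "adic_eval P Y (F + G) = adic_eval P Y F + adic_eval P Y G"
  by (induction F G rule: poly_induct2) (simp_all add: pcompose_add algebra_simps)

lemma adic_eval_diff: "adic_eval P Y (F - G) = adic_eval P Y F - adic_eval P Y G"
proof -
  have "adic_eval P Y (- G) = - adic_eval P Y G"
    by (induction G) (simp_all add: pcompose_uminus)
  then show ?thesis
    using adic_eval_add[of P Y F "- G"] by simp
qed

lemma adic_eval_mult: "adic_eval P Y (F * G) = adic_eval P Y F * adic_eval P Y G"
proof (induction F)
  case (pCons a F)
  have "adic_eval P Y (smult a G) = a \<circ>\<^sub>p Y * adic_eval P Y G"
    by (induction G) (simp_all add: pcompose_mult algebra_simps)
  with pCons.IH show ?case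
    by (simp add: adic_eval_add algebra_simps)
qed simp

lemma adic_eval_1 [simp]: "adic_eval P Y 1 = 1"
  by (simp add: one_pCons pcompose_1)

lemma adic_expansion_exists:
  fixes P Y :: "'a::field poly"
  assumes Y: "[Y = [:0, 1:]] (mod P)"
  shows "\<exists>F. [adic_eval P Y F = a] (mod P ^ m)"
proof (induction m arbitrary: a)
  case (Suc m)
  obtain b where b: "a - a \<circ>\<^sub>p Y = P * b"
    using pcompose_cong_self[OF Y, of a]
    by (auto simp: cong_iff_dvd_diff dvd_diff_commute elim: dvdE)
  obtain G where "P ^ m dvd adic_eval P Y G - b"
    using Suc.IH unfolding cong_iff_dvd_diff by blast
  moreover have "adic_eval P Y (pCons a G) - a = P * (adic_eval P Y G - b)"
    using b by (simp add: algebra_simps)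
  ultimately have "[adic_eval P Y (pCons a G) = a] (mod P ^ Suc m)"
    by (simp add: cong_iff_dvd_diff)
  then show ?case ..
qed simp

lemma pcompose_lifted_root_dvd:
  assumes "lifted_root P k Y" and "P dvd a"
  shows "P ^ k dvd a \<circ>\<^sub>p Y"
proof -
  obtain h where "a = P * h" using assms(2) by (elim dvdE)
  then have "a \<circ>\<^sub>p Y = P \<circ>\<^sub>p Y * h \<circ>\<^sub>p Y" by (simp add: pcompose_mult)
  then show ?thesis
    using assms(1) unfolding lifted_root_def cong_0_iff by simp
qed

lemma adic_eval_dvd_power_iff:
  fixes P Y :: "'a::field poly"
  assumes "P \<noteq> 0" and Y: "lifted_root P k Y" and "m \<le> k"
  shows "P ^ m dvd adic_eval P Y H \<longleftrightarrow> (\<forall>j<m. P dvd coeff H j)"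
  using \<open>m \<le> k\<close>
proof (induction m arbitrary: H)
  case (Suc m)
  obtain a H' where H: "H = pCons a H'" by (cases H)
  have low: "P ^ Suc m dvd a \<circ>\<^sub>p Y" if "P dvd a"
    using le_imp_power_dvd[OF Suc.prems] pcompose_lifted_root_dvd[OF Y that] by (rule dvd_trans)
  have "P dvd a" if "P ^ Suc m dvd a \<circ>\<^sub>p Y + P * adic_eval P Y H'"
  proof -
    have "P dvd a \<circ>\<^sub>p Y + P * adic_eval P Y H'"
      using that by (rule dvd_trans[rotated]) simp
    then have "P dvd a \<circ>\<^sub>p Y"
      by (simp add: dvd_add_left_iff)
    moreover have "[a \<circ>\<^sub>p Y = a] (mod P)"
      using Y unfolding lifted_root_def by (blast intro: pcompose_cong_self)
    ultimately show ?thesis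
      by (metis cong_0_iff cong_sym cong_trans)
  qed
  then have "P ^ Suc m dvd adic_eval P Y H \<longleftrightarrow> P dvd a \<and> P ^ Suc m dvd P * adic_eval P Y H'"
    unfolding H adic_eval_pCons using low by (metis dvd_add_right_iff)
  also have "\<dots> \<longleftrightarrow> P dvd a \<and> P ^ m dvd adic_eval P Y H'"
    using \<open>P \<noteq> 0\<close> by simp
  also have "\<dots> \<longleftrightarrow> (\<forall>j<Suc m. P dvd coeff H j)"
    using Suc by (auto simp: H less_Suc_eq_0_disj)
  finally show ?case .
qed simp

definition trunc_cong :: "'a::unique_euclidean_ring \<Rightarrow> nat \<Rightarrow> 'a poly \<Rightarrow> 'a poly \<Rightarrow> bool" where
  "trunc_cong P k F G \<longleftrightarrow> (\<forall>j<k. [coeff F j = coeff G j] (mod P))"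

lemma trunc_cong_trans [trans]: "trunc_cong P k F G \<Longrightarrow> trunc_cong P k G H \<Longrightarrow> trunc_cong P k F H"
  unfolding trunc_cong_def by (blast intro: cong_trans)

lemma adic_eval_cong_iff:
  fixes P Y :: "'a::field poly"
  assumes "P \<noteq> 0" and "lifted_root P k Y"
  shows "[adic_eval P Y F = adic_eval P Y G] (mod P ^ k) \<longleftrightarrow> trunc_cong P k F G"
  using adic_eval_dvd_power_iff[OF assms order.refl, of "F - G"]
  by (simp add: cong_iff_dvd_diff trunc_cong_def adic_eval_diff)

context
  fixes P Q :: "'a::unique_euclidean_ring" and f :: "'a \<Rightarrow> 'a"
  assumes f: "induces_ring_hom P Q f" and f0: "f 0 = 0"
begin

lemma trunc_cong_map_poly: "trunc_cong P k F G \<Longrightarrow> trunc_cong Q k (map_poly f F) (map_poly f G)"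
  unfolding trunc_cong_def by (simp add: coeff_map_poly f0 induces_ring_hom_cong[OF f])

lemma trunc_cong_map_poly_add: "trunc_cong Q k (map_poly f (F + G)) (map_poly f F + map_poly f G)"
  unfolding trunc_cong_def by (simp add: coeff_map_poly f0 induces_ring_hom_add[OF f])

lemma trunc_cong_map_poly_mult: "trunc_cong Q k (map_poly f (F * G)) (map_poly f F * map_poly f G)"
  unfolding trunc_cong_def
proof (intro allI impI)
  fix j
  have "[f (\<Sum>i\<le>j. coeff F i * coeff G (j - i)) = (\<Sum>i\<le>j. f (coeff F i * coeff G (j - i)))] (mod Q)"
    by (simp add: induces_ring_hom_sum[OF f])
  also have "[(\<Sum>i\<le>j. f (coeff F i * coeff G (j - i))) =
      (\<Sum>i\<le>j. f (coeff F i) * f (coeff G (j - i)))] (mod Q)"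
    by (intro cong_sum induces_ring_hom_mult[OF f])
  finally show "[coeff (map_poly f (F * G)) j = coeff (map_poly f F * map_poly f G) j] (mod Q)"
    by (simp add: coeff_map_poly f0 coeff_mult)
qed

lemma trunc_cong_map_poly_1: "trunc_cong Q k (map_poly f 1) 1"
  unfolding trunc_cong_def
  using induces_ring_hom_one[OF f] by (auto simp: coeff_map_poly f0)

end

lemma trunc_cong_map_poly_map_poly:
  assumes "f 0 = 0" "g 0 = 0" "\<And>a. [g (f a) = a] (mod P)"
  shows "trunc_cong P k (map_poly g (map_poly f F)) F"
  unfolding trunc_cong_def by (simp add: coeff_map_poly assms)

definition adic_expansion :: "'a::field poly \<Rightarrow> 'a poly \<Rightarrow> nat \<Rightarrow> 'a poly \<Rightarrow> 'a poly poly" where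
  "adic_expansion P Y k a = (SOME F. [adic_eval P Y F = a] (mod P ^ k))"

context
  fixes P Y :: "'a::field poly" and k :: nat
  assumes P: "P \<noteq> 0" and Y: "lifted_root P k Y"
begin

lemma adic_eval_adic_expansion: "[adic_eval P Y (adic_expansion P Y k a) = a] (mod P ^ k)"
  unfolding adic_expansion_def
  by (rule someI_ex) (use Y adic_expansion_exists in \<open>auto simp: lifted_root_def\<close>)

lemma trunc_cong_adic_expansionI:
  "[adic_eval P Y F = a] (mod P ^ k) \<Longrightarrow> trunc_cong P k (adic_expansion P Y k a) F"
  unfolding adic_eval_cong_iff[OF P Y, symmetric]
  by (metis adic_eval_adic_expansion cong_sym cong_trans)

lemma adic_expansion_cong:
  "[a = b] (mod P ^ k) \<Longrightarrow> trunc_cong P k (adic_expansion P Y k a) (adic_expansion P Y k b)"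
  by (rule trunc_cong_adic_expansionI) (metis adic_eval_adic_expansion cong_sym cong_trans)

lemma adic_expansion_add:
  "trunc_cong P k (adic_expansion P Y k (a + b)) (adic_expansion P Y k a + adic_expansion P Y k b)"
  by (rule trunc_cong_adic_expansionI) (simp add: adic_eval_add adic_eval_adic_expansion cong_add)

lemma adic_expansion_mult:
  "trunc_cong P k (adic_expansion P Y k (a * b)) (adic_expansion P Y k a * adic_expansion P Y k b)"
  by (rule trunc_cong_adic_expansionI) (simp add: adic_eval_mult adic_eval_adic_expansion cong_mult)

lemma adic_expansion_1: "trunc_cong P k (adic_expansion P Y k 1) 1"
  by (rule trunc_cong_adic_expansionI) simp

lemma adic_expansion_adic_eval: "trunc_cong P k (adic_expansion P Y k (adic_eval P Y F)) F"
  by (rule trunc_cong_adic_expansionI) simp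

end

section \<open>Lifting an isomorphism of residue fields\<close>

definition lift_map ::
    "'a::field poly \<Rightarrow> 'a poly \<Rightarrow> 'a poly \<Rightarrow> 'a poly \<Rightarrow> nat \<Rightarrow>
      ('a poly \<Rightarrow> 'a poly) \<Rightarrow> 'a poly \<Rightarrow> 'a poly" where
  "lift_map P Y Q Z k f a = adic_eval Q Z (map_poly f (adic_expansion P Y k a))"

lemma induces_ring_hom_lift_map:
  assumes P: "P \<noteq> 0" "lifted_root P k Y" and Q: "Q \<noteq> 0" "lifted_root Q k Z"
    and f: "induces_ring_hom P Q f" "f 0 = 0"
  shows "induces_ring_hom (P ^ k) (Q ^ k) (lift_map P Y Q Z k f)"
proof -
  let ?E = "adic_expansion P Y k" and ?f = "map_poly f"
  note Q_cong = adic_eval_cong_iff[OF Q, THEN iffD2]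
  note map = trunc_cong_map_poly[OF f]
  have "trunc_cong Q k (?f (?E a)) (?f (?E b))" if "[a = b] (mod P ^ k)" for a b
    using map adic_expansion_cong[OF P that] by blast
  moreover have "trunc_cong Q k (?f (?E (a + b))) (?f (?E a) + ?f (?E b))" for a b
    using map[OF adic_expansion_add[OF P]] trunc_cong_map_poly_add[OF f]
    by (rule trunc_cong_trans)
  moreover have "trunc_cong Q k (?f (?E (a * b))) (?f (?E a) * ?f (?E b))" for a b
    using map[OF adic_expansion_mult[OF P]] trunc_cong_map_poly_mult[OF f]
    by (rule trunc_cong_trans)
  moreover have "trunc_cong Q k (?f (?E 1)) 1"
    using map[OF adic_expansion_1[OF P]] trunc_cong_map_poly_1[OF f]
    by (rule trunc_cong_trans)
  ultimately show ?thesis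
    unfolding induces_ring_hom_def lift_map_def
    by (metis Q_cong adic_eval_add adic_eval_mult adic_eval_1)
qed

lemma lift_map_inverse:
  assumes P: "P \<noteq> 0" "lifted_root P k Y" and Q: "Q \<noteq> 0" "lifted_root Q k Z"
    and "f 0 = 0" and g: "induces_ring_hom Q P g" "g 0 = 0"
    and gf: "\<And>a. [g (f a) = a] (mod P)"
  shows "[lift_map Q Z P Y k g (lift_map P Y Q Z k f a) = a] (mod P ^ k)"
proof -
  let ?F = "map_poly f (adic_expansion P Y k a)"
  have "trunc_cong P k (map_poly g (adic_expansion Q Z k (adic_eval Q Z ?F))) (map_poly g ?F)"
    using trunc_cong_map_poly[OF g adic_expansion_adic_eval[OF Q]] .
  also have "trunc_cong P k (map_poly g ?F) (adic_expansion P Y k a)"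
    using \<open>f 0 = 0\<close> g(2) gf by (rule trunc_cong_map_poly_map_poly)
  finally have "[lift_map Q Z P Y k g (lift_map P Y Q Z k f a) =
      adic_eval P Y (adic_expansion P Y k a)] (mod P ^ k)"
    unfolding lift_map_def by (simp add: adic_eval_cong_iff[OF P])
  also have "[adic_eval P Y (adic_expansion P Y k a) = a] (mod P ^ k)"
    by (rule adic_eval_adic_expansion[OF P])
  finally show ?thesis .
qed

lemma induces_ring_iso_lift:
  assumes P: "P \<noteq> 0" "lifted_root P k Y" and Q: "Q \<noteq> 0" "lifted_root Q k Z"
    and iso: "induces_ring_iso P Q f g"
  shows "\<exists>f' g'. induces_ring_iso (P ^ k) (Q ^ k) f' g'"
proof -
  \<comment> \<open>\<open>map_poly\<close> needs maps fixing \<open>0\<close>, whereas \<open>f 0\<close> is only congruent to \<open>0\<close>\<close>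
  define f0 where "f0 c = f c - f 0" for c
  define g0 where "g0 c = g c - g 0" for c
  have hom: "induces_ring_hom P Q f" "induces_ring_hom Q P g"
    using iso unfolding induces_ring_iso_def by blast+
  have f0_cong: "[f0 c = f c] (mod Q)" for c
    using induces_ring_hom_zero[OF hom(1)] unfolding f0_def by (metis cong_diff cong_refl diff_zero)
  have g0_cong: "[g0 c = g c] (mod P)" for c
    using induces_ring_hom_zero[OF hom(2)] unfolding g0_def by (metis cong_diff cong_refl diff_zero)
  have "induces_ring_iso P Q f0 g0"
    by (rule induces_ring_iso_congruent_maps[OF iso f0_cong g0_cong])
  then have hom0: "induces_ring_hom P Q f0" "induces_ring_hom Q P g0"
    and inv: "\<And>a. [g0 (f0 a) = a] (mod P)" "\<And>b. [f0 (g0 b) = b] (mod Q)"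
    unfolding induces_ring_iso_def by blast+
  have "f0 0 = 0" "g0 0 = 0" by (simp_all add: f0_def g0_def)
  then have "induces_ring_iso (P ^ k) (Q ^ k) (lift_map P Y Q Z k f0) (lift_map Q Z P Y k g0)"
    unfolding induces_ring_iso_def
    using induces_ring_hom_lift_map[OF P Q hom0(1)] induces_ring_hom_lift_map[OF Q P hom0(2)]
      lift_map_inverse[OF P Q _ hom0(2) _ inv(1)] lift_map_inverse[OF Q P _ hom0(1) _ inv(2)]
    by blast
  then show ?thesis by blast
qed

theorem mainTheorem6:
  fixes P1 P2 :: "'a::field poly" and k :: nat
  assumes "irreducible P1" and "irreducible P2"
    and "pderiv P1 \<noteq> 0" and "pderiv P2 \<noteq> 0"
    and "k \<ge> 1"
  shows "(Kx Quot (PIdl\<^bsub>Kx\<^esub> (P1 ^ k)) \<simeq> Kx Quot (PIdl\<^bsub>Kx\<^esub> (P2 ^ k)))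
     \<longleftrightarrow> (Kx Quot (PIdl\<^bsub>Kx\<^esub> P1) \<simeq> Kx Quot (PIdl\<^bsub>Kx\<^esub> P2))"
proof
  assume "Kx Quot (PIdl\<^bsub>Kx\<^esub> (P1 ^ k)) \<simeq> Kx Quot (PIdl\<^bsub>Kx\<^esub> (P2 ^ k))"
  then obtain f g where "induces_ring_iso (P1 ^ k) (P2 ^ k) f g"
    unfolding Kx_Quot_iso_iff by blast
  then have "induces_ring_iso P1 P2 f g"
    using assms(1,2,5) induces_ring_iso_reduce_power by blast
  then show "Kx Quot (PIdl\<^bsub>Kx\<^esub> P1) \<simeq> Kx Quot (PIdl\<^bsub>Kx\<^esub> P2)"
    unfolding Kx_Quot_iso_iff by blast
next
  assume "Kx Quot (PIdl\<^bsub>Kx\<^esub> P1) \<simeq> Kx Quot (PIdl\<^bsub>Kx\<^esub> P2)"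
  then obtain f g where "induces_ring_iso P1 P2 f g"
    unfolding Kx_Quot_iso_iff by blast
  moreover obtain Y1 Y2 where "lifted_root P1 k Y1" "lifted_root P2 k Y2"
    using hensel_lifting assms(1-4) by metis
  moreover have "P1 \<noteq> 0" "P2 \<noteq> 0"
    using assms(1,2) by auto
  ultimately show "Kx Quot (PIdl\<^bsub>Kx\<^esub> (P1 ^ k)) \<simeq> Kx Quot (PIdl\<^bsub>Kx\<^esub> (P2 ^ k))"
    unfolding Kx_Quot_iso_iff using induces_ring_iso_lift by blast
qed

end
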